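(* Let $G$ be a Hausdorff topological group. (a) If $G$ is STAP then $G$ is HTAP, and if $G$ is HTAP then $G$ is TAP. (a-bis) If $G$ is abelian, then $G$ is HTAP if and only if $G$ is TAP. (b) Let $(D_i)_{i\in\mathbb N}$ be nontrivial discrete groups and $H=\{g\in\prod_i D_i:\{i:g(i)\ne e_{D_i}\}\text{ finite}\}$ with the topology induced from the product topology. Then $H$ is HTAP but not STAP. In particular, taking the $D_i$ finite abelian, there is a countable metrizable precompact abelian group which is TAP but not STAP.
   Context: $\prod_{k=1}^n a_k=a_1\cdots a_n$; $e$ is the neutral element. A sequence $(g_n)$ in $G$ is hyper-multipliable if for every integer sequence $(m_n)$ the sequence $\left(\prod_{k=1}^n g_k^{m_k}\right)_n$ converges in $G$; hyper-converging if $g_n^{m_n}\to e$ for every integer sequence $(m_n)$. A subset $A\subset G$ is absolutely productive if every sequence of pairwise distinct elements of $A$ is hyper-multipliable. $G$ is TAP if every absolutely productive subset of $G$ is finite; HTAP if no sequence of pairwise distinct elements of $G$ is hyper-multipliable; STAP if no sequence of pairwise distinct elements of $G$ is hyper-converging. *)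

theory Defs
  imports "HOL-Analysis.Analysis" "HOL-Algebra.Product_Groups"
begin

definition Hausdorff_topological_group :: "('a, 'b) monoid_scheme \<Rightarrow> 'a topology \<Rightarrow> bool" where
  "Hausdorff_topological_group G T \<longleftrightarrow>
     group G \<and> topspace T = carrier G \<and> Hausdorff_space T \<and>
     continuous_map (prod_topology T T) T (\<lambda>(x, y). x \<otimes>\<^bsub>G\<^esub> y) \<and>
     continuous_map T T (\<lambda>x. inv\<^bsub>G\<^esub> x)"

fun ordprod :: "('a, 'b) monoid_scheme \<Rightarrow> (nat \<Rightarrow> 'a) \<Rightarrow> nat \<Rightarrow> 'a" where
  "ordprod G a 0 = \<one>\<^bsub>G\<^esub>"
| "ordprod G a (Suc n) = ordprod G a n \<otimes>\<^bsub>G\<^esub> a n"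

definition hyper_multipliable :: "('a, 'b) monoid_scheme \<Rightarrow> 'a topology \<Rightarrow> (nat \<Rightarrow> 'a) \<Rightarrow> bool" where
  "hyper_multipliable G T g \<longleftrightarrow>
     (\<forall>m :: nat \<Rightarrow> int. \<exists>l. limitin T (\<lambda>n. ordprod G (\<lambda>k. g k [^]\<^bsub>G\<^esub> m k) n) l sequentially)"

definition hyper_converging :: "('a, 'b) monoid_scheme \<Rightarrow> 'a topology \<Rightarrow> (nat \<Rightarrow> 'a) \<Rightarrow> bool" where
  "hyper_converging G T g \<longleftrightarrow>
     (\<forall>m :: nat \<Rightarrow> int. limitin T (\<lambda>n. g n [^]\<^bsub>G\<^esub> m n) \<one>\<^bsub>G\<^esub> sequentially)"

definition absolutely_productive :: "('a, 'b) monoid_scheme \<Rightarrow> 'a topology \<Rightarrow> 'a set \<Rightarrow> bool" where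
  "absolutely_productive G T A \<longleftrightarrow>
     (\<forall>g. inj g \<and> range g \<subseteq> A \<longrightarrow> hyper_multipliable G T g)"

definition TAP :: "('a, 'b) monoid_scheme \<Rightarrow> 'a topology \<Rightarrow> bool" where
  "TAP G T \<longleftrightarrow> (\<forall>A. A \<subseteq> carrier G \<and> absolutely_productive G T A \<longrightarrow> finite A)"

definition HTAP :: "('a, 'b) monoid_scheme \<Rightarrow> 'a topology \<Rightarrow> bool" where
  "HTAP G T \<longleftrightarrow> \<not> (\<exists>g. inj g \<and> range g \<subseteq> carrier G \<and> hyper_multipliable G T g)"

definition STAP :: "('a, 'b) monoid_scheme \<Rightarrow> 'a topology \<Rightarrow> bool" where
  "STAP G T \<longleftrightarrow> \<not> (\<exists>g. inj g \<and> range g \<subseteq> carrier G \<and> hyper_converging G T g)"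

definition precompact_group :: "('a, 'b) monoid_scheme \<Rightarrow> 'a topology \<Rightarrow> bool" where
  "precompact_group G T \<longleftrightarrow>
     (\<forall>U. openin T U \<and> \<one>\<^bsub>G\<^esub> \<in> U \<longrightarrow>
        (\<exists>F. finite F \<and> F \<subseteq> carrier G \<and> carrier G \<subseteq> (\<Union>x\<in>F. x <#\<^bsub>G\<^esub> U)))"

definition fin_supp_topology :: "(nat \<Rightarrow> ('a, 'b) monoid_scheme) \<Rightarrow> (nat \<Rightarrow> 'a) topology" where
  "fin_supp_topology D =
     subtopology (product_topology (\<lambda>i. discrete_topology (carrier (D i))) UNIV)
                 (carrier (sum_group UNIV D))"

end

theory Submission
  imports Defs "HOL-Algebra.FiniteProduct"
begin

(* Part (a) is soft: a hyper-multipliable sequence is hyper-converging, because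
   each term g_n^{m_n} is the quotient of two consecutive partial products, which
   have the same limit; and an infinite absolutely productive set contains an
   injective sequence, which is then hyper-multipliable.

   Part (a-bis) needs the converse of the second implication for abelian groups:
   the range of an injective hyper-multipliable sequence is absolutely productive.
   Choosing exponents 0 shows that every subseries of (g_k^{m_k}) converges; by a
   block argument this forces the finite products over sets of large indices to be
   uniformly small ("small tails"); and small tails make convergence invariant
   under reindexing, which covers every injective sequence inside the range.

   Part (b) concerns the restricted product H of the D_i with the topology of
   pointwise eventual equality.  Sequences converge coordinatewise by becoming
   eventually constant, which gives the group topology and, for the sequence of
   "unit vectors" a_n e_n, hyper-convergence (so H is not STAP).  For HTAP, an
   injective hyper-multipliable sequence has finitely many nontrivial entries in
   every row and every column, so a diagonal subsequence exists; multiplying along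
   it yields a limit with infinite support, which is impossible. *)

lemma Hausdorff_topological_groupD:
  assumes "Hausdorff_topological_group G T"
  shows "group G" "topspace T = carrier G" "Hausdorff_space T"
    "continuous_map (prod_topology T T) T (\<lambda>(x, y). x \<otimes>\<^bsub>G\<^esub> y)"
    "continuous_map T T (\<lambda>x. inv\<^bsub>G\<^esub> x)"
  using assms by (simp_all add: Hausdorff_topological_group_def)

lemma limitin_group_mult:
  fixes G (structure)
  assumes H: "Hausdorff_topological_group G T"
    and P: "limitin T P p F" and Q: "limitin T Q q F"
  shows "limitin T (\<lambda>n. P n \<otimes> Q n) (p \<otimes> q) F"
proof -
  have "limitin (prod_topology T T) (\<lambda>n. (P n, Q n)) (p, q) F"
    using P Q by (simp add: limitin_pairwise o_def)
  from continuous_map_limit[OF Hausdorff_topological_groupD(4)[OF H] this]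
  show ?thesis by (simp add: o_def)
qed

lemma limitin_group_inv:
  fixes G (structure)
  assumes H: "Hausdorff_topological_group G T" and P: "limitin T P p F"
  shows "limitin T (\<lambda>n. inv (P n)) (inv p) F"
  using continuous_map_limit[OF Hausdorff_topological_groupD(5)[OF H] P] by (simp add: o_def)

lemma limitin_group_quotient:
  fixes G (structure)
  assumes H: "Hausdorff_topological_group G T"
    and P: "limitin T P l F" and Q: "limitin T Q l F"
  shows "limitin T (\<lambda>n. inv (P n) \<otimes> Q n) \<one> F"
proof -
  interpret group G using Hausdorff_topological_groupD(1)[OF H] .
  have "l \<in> carrier G"
    using P Hausdorff_topological_groupD(2)[OF H] by (simp add: limitin_def)
  with limitin_group_mult[OF H limitin_group_inv[OF H P] Q] show ?thesis by simp
qed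

lemma limitin_compose_filterlim:
  assumes "limitin X f l F" "filterlim g F G"
  shows "limitin X (\<lambda>n. f (g n)) l G"
  using assms unfolding limitin_def filterlim_iff by blast

lemma ordprod_closed:
  fixes G (structure)
  assumes "monoid G" "\<And>k. a k \<in> carrier G"
  shows "ordprod G a n \<in> carrier G"
proof -
  interpret monoid G by fact
  show ?thesis by (induction n) (simp_all add: assms)
qed

lemma ordprod_Suc_quotient:
  fixes G (structure)
  assumes "group G" "\<And>k. a k \<in> carrier G"
  shows "inv (ordprod G a n) \<otimes> ordprod G a (Suc n) = a n"
proof -
  interpret group G by fact
  have "ordprod G a n \<in> carrier G" by (rule ordprod_closed) (simp_all add: assms)
  then show ?thesis using assms(2) by (simp add: m_assoc[symmetric])
qed

lemma ordprod_eq_finprod: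
  fixes G (structure)
  assumes "comm_monoid G" "\<And>k. a k \<in> carrier G"
  shows "ordprod G a n = finprod G a {..<n}"
proof -
  interpret comm_monoid G by fact
  show ?thesis
    by (induction n) (simp_all add: assms lessThan_Suc m_comm)
qed

lemma ordprod_eventually_constant:
  fixes G (structure)
  assumes "group G" "\<And>k. a k \<in> carrier G"
    and const: "eventually (\<lambda>n. ordprod G a n = c) sequentially"
  shows "eventually (\<lambda>n. a n = \<one>) sequentially"
proof -
  interpret group G by fact
  have "eventually (\<lambda>n. ordprod G a (Suc n) = c) sequentially"
    using const by (rule eventually_sequentially_Suc[THEN iffD2])
  with const have "eventually (\<lambda>n. ordprod G a n = c \<and> ordprod G a (Suc n) = c) sequentially"
    by (rule eventually_conj)
  then show ?thesis
  proof (rule eventually_mono)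
    fix n assume n: "ordprod G a n = c \<and> ordprod G a (Suc n) = c"
    have "a n = inv (ordprod G a n) \<otimes> ordprod G a (Suc n)"
      using ordprod_Suc_quotient[OF assms(1), where a = a and n = n] assms(2) by simp
    also have "\<dots> = \<one>"
      using n ordprod_closed[OF is_monoid, where a = a and n = n] assms(2)
      by (simp del: ordprod.simps(2))
    finally show "a n = \<one>" .
  qed
qed

lemma ordprod_single:
  fixes G (structure)
  assumes "monoid G" "c \<in> carrier G"
  shows "ordprod G (\<lambda>k. if k = p then c else \<one>) n = (if p < n then c else \<one>)"
proof -
  interpret monoid G by fact
  show ?thesis
    by (induction n) (auto simp: assms less_Suc_eq)
qed

lemma ordprod_single_eventually:
  fixes G (structure)
  assumes "monoid G" "c \<in> carrier G"
    and "eventually (\<lambda>n. ordprod G (\<lambda>k. if k = p then c else \<one>) n = l) sequentially"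
  shows "l = c"
proof -
  have "eventually (\<lambda>n. (if p < n then c else \<one>) = l \<and> p < n) sequentially"
    using assms(3) eventually_gt_at_top[of p] by eventually_elim (simp add: ordprod_single[OF assms(1,2)])
  then show ?thesis
    by (auto dest: eventually_happens)
qed

lemma hyper_multipliable_imp_hyper_converging:
  fixes G (structure)
  assumes H: "Hausdorff_topological_group G T" and g: "range g \<subseteq> carrier G"
    and mult: "hyper_multipliable G T g"
  shows "hyper_converging G T g"
  unfolding hyper_converging_def
proof
  interpret group G using Hausdorff_topological_groupD(1)[OF H] .
  fix m :: "nat \<Rightarrow> int"
  define P where "P = ordprod G (\<lambda>k. g k [^] m k)"
  obtain l where l: "limitin T P l sequentially"
    using mult unfolding hyper_multipliable_def P_def by blast
  have "limitin T (\<lambda>n. P (Suc n)) l sequentially"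
    using limitin_sequentially_offset[OF l, of 1] by simp
  then have "limitin T (\<lambda>n. inv (P n) \<otimes> P (Suc n)) \<one> sequentially"
    by (rule limitin_group_quotient[OF H l])
  moreover have "inv (P n) \<otimes> P (Suc n) = g n [^] m n" for n
    unfolding P_def using g by (intro ordprod_Suc_quotient[OF is_group]) auto
  ultimately show "limitin T (\<lambda>n. g n [^] m n) \<one> sequentially"
    by simp
qed

lemma STAP_imp_HTAP:
  assumes "Hausdorff_topological_group G T" "STAP G T"
  shows "HTAP G T"
  using assms hyper_multipliable_imp_hyper_converging
  unfolding STAP_def HTAP_def by blast

(* Part (a), second implication: an infinite set contains an injective sequence. *)
lemma HTAP_imp_TAP:
  assumes "HTAP G T"
  shows "TAP G T"
  unfolding TAP_def
proof (intro allI impI)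
  fix A assume A: "A \<subseteq> carrier G \<and> absolutely_productive G T A"
  show "finite A"
  proof (rule ccontr)
    assume "infinite A"
    then obtain g :: "nat \<Rightarrow> _" where "inj g" "range g \<subseteq> A"
      using infinite_countable_subset by blast
    with A assms show False unfolding absolutely_productive_def HTAP_def by blast
  qed
qed

definition subseries_convergent :: "('a, 'b) monoid_scheme \<Rightarrow> 'a topology \<Rightarrow> (nat \<Rightarrow> 'a) \<Rightarrow> bool" where
  "subseries_convergent G T x \<longleftrightarrow>
     (\<forall>S. \<exists>l. limitin T (\<lambda>n. finprod G x (S \<inter> {..<n})) l sequentially)"

definition small_tails :: "('a, 'b) monoid_scheme \<Rightarrow> 'a topology \<Rightarrow> (nat \<Rightarrow> 'a) \<Rightarrow> bool" where
  "small_tails G T x \<longleftrightarrow>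
     (\<forall>V. openin T V \<and> \<one>\<^bsub>G\<^esub> \<in> V \<longrightarrow>
        (\<exists>N. \<forall>F. finite F \<and> F \<subseteq> {N..} \<longrightarrow> finprod G x F \<in> V))"

lemma block_sequence:
  fixes B :: "nat \<Rightarrow> nat set"
  assumes fin: "\<And>N. finite (B N)" and above: "\<And>N. B N \<subseteq> {N..}"
  shows "\<exists>a. strict_mono a \<and> (\<forall>j. B (a j) \<subseteq> {a j..<a (Suc j)})"
proof -
  define b where "b N = Suc (Max (insert N (B N)))" for N
  have B_block: "B N \<subseteq> {N..<b N}" for N
    using fin above[of N] by (auto simp: b_def less_Suc_eq_le)
  have b_gt: "N < b N" for N
    using fin by (simp add: b_def less_Suc_eq_le)
  define a where "a j = (b ^^ j) 0" for j
  have a_Suc: "a (Suc j) = b (a j)" for j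
    by (simp add: a_def)
  have "strict_mono a"
    by (simp add: strict_mono_Suc_iff a_Suc b_gt)
  moreover have "B (a j) \<subseteq> {a j..<a (Suc j)}" for j
    using B_block[of "a j"] by (simp add: a_Suc)
  ultimately show ?thesis
    by blast
qed

lemma finprod_blocks_step:
  fixes G (structure) and a :: "nat \<Rightarrow> nat"
  assumes "comm_monoid G" "\<And>k. x k \<in> carrier G"
    and a: "strict_mono a" and B: "\<And>i. B i \<subseteq> {a i..<a (Suc i)}"
  shows "finprod G x ((\<Union>i. B i) \<inter> {..<a (Suc j)})
       = finprod G x ((\<Union>i. B i) \<inter> {..<a j}) \<otimes> finprod G x (B j)"
proof -
  interpret comm_monoid G by fact
  have "(\<Union>i. B i) \<inter> {..<a (Suc j)} = ((\<Union>i. B i) \<inter> {..<a j}) \<union> B j"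
  proof (intro equalityI subsetI)
    fix k assume k: "k \<in> (\<Union>i. B i) \<inter> {..<a (Suc j)}"
    then obtain i where i: "k \<in> B i" by auto
    have "i \<le> j"
    proof (rule ccontr)
      assume "\<not> i \<le> j"
      then have "a (Suc j) \<le> a i"
        using a by (simp add: strict_mono_less_eq Suc_le_eq)
      then show False using B[of i] i k by auto
    qed
    show "k \<in> ((\<Union>i. B i) \<inter> {..<a j}) \<union> B j"
    proof (cases "i = j")
      case False
      with \<open>i \<le> j\<close> have "a (Suc i) \<le> a j"
        using a by (simp add: strict_mono_less_eq Suc_le_eq)
      then show ?thesis using B[of i] i by auto
    qed (use i in simp)
  qed (use B strict_monoD[OF a, of j "Suc j"] in force)+
  moreover have "((\<Union>i. B i) \<inter> {..<a j}) \<inter> B j = {}"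
    using B[of j] by auto
  moreover have "finite (B j)"
    using B[of j] finite_subset by blast
  ultimately show ?thesis
    using assms(2) by (simp add: finprod_Un_disjoint)
qed

(* Subseries convergence implies small tails: otherwise blocks B_j of large indices
   with products outside a neighbourhood V of the identity combine into one subseries
   whose consecutive partial products differ by exactly these block products. *)
lemma subseries_convergent_imp_small_tails:
  fixes G (structure)
  assumes H: "Hausdorff_topological_group G T" and C: "comm_group G"
    and x: "\<And>k. x k \<in> carrier G" and conv: "subseries_convergent G T x"
  shows "small_tails G T x"
  unfolding small_tails_def
proof (intro allI impI, rule ccontr)
  interpret comm_group G by fact
  fix V assume V: "openin T V \<and> \<one> \<in> V"
  assume "\<not> (\<exists>N. \<forall>F. finite F \<and> F \<subseteq> {N..} \<longrightarrow> finprod G x F \<in> V)"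
  then obtain B where B: "\<And>N. finite (B N)" "\<And>N. B N \<subseteq> {N..}" "\<And>N. finprod G x (B N) \<notin> V"
    by metis
  obtain a where a_mono: "strict_mono a" and a_block: "\<And>j. B (a j) \<subseteq> {a j..<a (Suc j)}"
    using block_sequence[OF B(1,2)] by blast
  define S where "S = (\<Union>j. B (a j))"
  define Q where "Q n = finprod G x (S \<inter> {..<n})" for n
  have Q_step: "Q (a (Suc j)) = Q (a j) \<otimes> finprod G x (B (a j))" for j
    unfolding Q_def S_def by (rule finprod_blocks_step[OF comm_monoid_axioms x a_mono a_block])
  obtain l where l: "limitin T Q l sequentially"
    using conv unfolding subseries_convergent_def Q_def by blast
  have l_a: "limitin T (\<lambda>j. Q (a j)) l sequentially"
    using limitin_subsequence[OF a_mono l] by (simp add: o_def)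
  have "limitin T (\<lambda>j. Q (a (Suc j))) l sequentially"
    using limitin_sequentially_offset[OF l_a, of 1] by simp
  then have "limitin T (\<lambda>j. inv (Q (a j)) \<otimes> Q (a (Suc j))) \<one> sequentially"
    by (rule limitin_group_quotient[OF H l_a])
  moreover have "inv (Q (a j)) \<otimes> Q (a (Suc j)) = finprod G x (B (a j))" for j
  proof -
    have "Q (a j) \<in> carrier G" "finprod G x (B (a j)) \<in> carrier G"
      using x by (simp_all add: Q_def)
    then show ?thesis by (simp add: Q_step m_assoc[symmetric])
  qed
  ultimately have "limitin T (\<lambda>j. finprod G x (B (a j))) \<one> sequentially"
    by simp
  then have "eventually (\<lambda>j. finprod G x (B (a j)) \<in> V) sequentially"
    using V by (simp add: limitin_def)
  then show False
    using B(3) by (simp add: eventually_sequentially)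
qed

lemma small_tails_limitin:
  fixes G (structure)
  assumes H: "Hausdorff_topological_group G T" and tails: "small_tails G T x"
    and F: "\<And>n. finite (F n)" "\<And>n. F n \<subseteq> {K n..}" and K: "filterlim K at_top sequentially"
  shows "limitin T (\<lambda>n. finprod G x (F n)) \<one> sequentially"
  unfolding limitin_def
proof (intro conjI allI impI)
  show "\<one> \<in> topspace T"
    using Hausdorff_topological_groupD[OF H] by (simp add: group.is_monoid monoid.one_closed)
  fix V assume "openin T V \<and> \<one> \<in> V"
  with tails have "\<exists>N. \<forall>F. finite F \<and> F \<subseteq> {N..} \<longrightarrow> finprod G x F \<in> V"
    unfolding small_tails_def by blast
  then obtain N where N: "\<And>F. finite F \<Longrightarrow> F \<subseteq> {N..} \<Longrightarrow> finprod G x F \<in> V"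
    by blast
  have "eventually (\<lambda>n. N \<le> K n) sequentially"
    using K by (simp add: filterlim_at_top)
  then show "eventually (\<lambda>n. finprod G x (F n) \<in> V) sequentially"
  proof (rule eventually_mono)
    fix n assume "N \<le> K n"
    then show "finprod G x (F n) \<in> V"
      using F[of n] by (intro N) auto
  qed
qed

lemma least_later_value:
  fixes \<sigma> :: "nat \<Rightarrow> nat"
  assumes \<sigma>: "inj \<sigma>"
  defines "K n \<equiv> LEAST k. k \<in> \<sigma> ` {n..}"
  shows "\<And>n k. k < K n \<Longrightarrow> k \<in> range \<sigma> \<Longrightarrow> k \<in> \<sigma> ` {..<n}"
    and "filterlim K at_top sequentially"
proof -
  fix n k assume k: "k < K n" "k \<in> range \<sigma>"
  then obtain i where i: "k = \<sigma> i" by blast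
  have "i < n"
  proof (rule ccontr)
    assume "\<not> i < n"
    then have "k \<in> \<sigma> ` {n..}" using i by simp
    then have "K n \<le> k" unfolding K_def by (rule Least_le)
    with k(1) show False by simp
  qed
  then show "k \<in> \<sigma> ` {..<n}" using i by simp
next
  show "filterlim K at_top sequentially"
    unfolding filterlim_at_top eventually_sequentially
  proof
    fix Z
    have "finite (\<sigma> -` {..<Z})"
      using \<sigma> by (simp add: finite_vimageI)
    then obtain M where M: "\<sigma> -` {..<Z} \<subseteq> {..<M}"
      using finite_nat_bounded by blast
    have "Z \<le> K n" if "M \<le> n" for n
    proof -
      have "K n \<in> \<sigma> ` {n..}"
        unfolding K_def by (rule LeastI[of _ "\<sigma> n"]) simp
      then obtain i where "K n = \<sigma> i" "n \<le> i" by auto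
      moreover have "\<sigma> i \<notin> {..<Z}"
        using M \<open>M \<le> n\<close> \<open>n \<le> i\<close> by auto
      ultimately show ?thesis by simp
    qed
    then show "\<exists>M. \<forall>n\<ge>M. Z \<le> K n" by blast
  qed
qed

(* Small tails make convergence invariant under reindexing by an injection \<sigma>
   (terms outside the range of \<sigma> being trivial): the n-th rearranged product splits
   into an initial segment of the original series and a tail of large indices. *)
lemma limitin_reindex:
  fixes G (structure)
  assumes H: "Hausdorff_topological_group G T" and C: "comm_group G"
    and x: "\<And>k. x k \<in> carrier G" and tails: "small_tails G T x"
    and s: "limitin T (\<lambda>n. finprod G x {..<n}) s sequentially"
    and \<sigma>: "inj \<sigma>" and vanish: "\<And>k. k \<notin> range \<sigma> \<Longrightarrow> x k = \<one>"
  shows "limitin T (\<lambda>n. finprod G (\<lambda>j. x (\<sigma> j)) {..<n}) s sequentially"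
proof -
  interpret comm_group G by fact
  define K where "K n = (LEAST k. k \<in> \<sigma> ` {n..})" for n
  note K_below = least_later_value(1)[OF \<sigma>, folded K_def]
  note K_tends = least_later_value(2)[OF \<sigma>, folded K_def]
  define E where "E n = \<sigma> ` {..<n}" for n
  have split: "finprod G (\<lambda>j. x (\<sigma> j)) {..<n}
      = finprod G x {..<K n} \<otimes> finprod G x (E n \<inter> {K n..})" for n
  proof -
    have "finprod G (\<lambda>j. x (\<sigma> j)) {..<n} = finprod G x (E n)"
      unfolding E_def using \<sigma> x by (simp add: finprod_reindex inj_on_subset)
    also have "\<dots> = finprod G x ((E n \<inter> {..<K n}) \<union> (E n \<inter> {K n..}))"
      by (rule arg_cong[where f = "finprod G x"]) auto
    also have "\<dots> = finprod G x (E n \<inter> {..<K n}) \<otimes> finprod G x (E n \<inter> {K n..})"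
      using x by (intro finprod_Un_disjoint) (auto simp: E_def)
    also have "finprod G x (E n \<inter> {..<K n}) = finprod G x {..<K n}"
    proof (rule finprod_mono_neutral_cong_left)
      show "x k = \<one>" if "k \<in> {..<K n} - E n \<inter> {..<K n}" for k
        using that K_below[of k n] vanish[of k] by (auto simp: E_def)
    qed (use x in auto)
    finally show ?thesis .
  qed
  have head: "limitin T (\<lambda>n. finprod G x {..<K n}) s sequentially"
    by (rule limitin_compose_filterlim[OF s K_tends])
  have tail: "limitin T (\<lambda>n. finprod G x (E n \<inter> {K n..})) \<one> sequentially"
    by (rule small_tails_limitin[OF H tails _ _ K_tends]) (auto simp: E_def)
  have "s \<in> carrier G"
    using s Hausdorff_topological_groupD(2)[OF H] by (simp add: limitin_def)
  then show ?thesis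
    using limitin_group_mult[OF H head tail] by (simp add: split)
qed

(* Choosing the exponents 0 outside S turns subseries into partial products. *)
lemma hyper_multipliable_subseries_convergent:
  fixes G (structure) and m :: "nat \<Rightarrow> int"
  assumes C: "comm_group G" and g: "range g \<subseteq> carrier G"
    and mult: "hyper_multipliable G T g"
  shows "subseries_convergent G T (\<lambda>k. g k [^] m k)"
  unfolding subseries_convergent_def
proof
  interpret comm_group G by fact
  fix S :: "nat set"
  define m' where "m' k = (if k \<in> S then m k else 0)" for k
  obtain l where l: "limitin T (ordprod G (\<lambda>k. g k [^] m' k)) l sequentially"
    using mult unfolding hyper_multipliable_def by (elim allE[of _ m']) blast
  have "ordprod G (\<lambda>k. g k [^] m' k) n = finprod G (\<lambda>k. g k [^] m k) (S \<inter> {..<n})" for n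
  proof -
    have "ordprod G (\<lambda>k. g k [^] m' k) n = finprod G (\<lambda>k. g k [^] m' k) {..<n}"
      using g by (intro ordprod_eq_finprod comm_monoid_axioms) auto
    also have "\<dots> = finprod G (\<lambda>k. g k [^] m k) (S \<inter> {..<n})"
      using g by (intro finprod_mono_neutral_cong_left[symmetric]) (auto simp: m'_def)
    finally show ?thesis .
  qed
  then have "ordprod G (\<lambda>k. g k [^] m' k) = (\<lambda>n. finprod G (\<lambda>k. g k [^] m k) (S \<inter> {..<n}))"
    by (rule ext)
  with l show "\<exists>l. limitin T (\<lambda>n. finprod G (\<lambda>k. g k [^] m k) (S \<inter> {..<n})) l sequentially"
    by auto
qed

(* In an abelian group the range of a hyper-multipliable sequence is absolutely
   productive: a sequence h of distinct elements of the range is g \<circ> \<sigma> for an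
   injection \<sigma>, and its products are reindexed products of a subseries-convergent
   sequence. *)
lemma hyper_multipliable_range_absolutely_productive:
  fixes G (structure)
  assumes H: "Hausdorff_topological_group G T" and C: "comm_group G"
    and g: "range g \<subseteq> carrier G" and mult: "hyper_multipliable G T g"
  shows "absolutely_productive G T (range g)"
  unfolding absolutely_productive_def
proof (intro allI impI)
  interpret comm_group G by fact
  fix h :: "nat \<Rightarrow> 'a" assume h: "inj h \<and> range h \<subseteq> range g"
  define \<sigma> where "\<sigma> n = inv_into UNIV g (h n)" for n
  have h_eq: "h n = g (\<sigma> n)" for n
    using h unfolding \<sigma>_def by (simp add: f_inv_into_f subset_eq)
  have \<sigma>: "inj \<sigma>"
  proof (rule injI)
    fix a b assume "\<sigma> a = \<sigma> b"
    then have "h a = h b" by (simp add: h_eq)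
    then show "a = b" using h by (simp add: inj_eq)
  qed
  show "hyper_multipliable G T h"
    unfolding hyper_multipliable_def
  proof
    fix m' :: "nat \<Rightarrow> int"
    define m where "m k = (if k \<in> range \<sigma> then m' (inv_into UNIV \<sigma> k) else 0)" for k
    define x where "x k = g k [^] m k" for k
    have x: "x k \<in> carrier G" for k
      using g by (auto simp: x_def)
    have vanish: "x k = \<one>" if "k \<notin> range \<sigma>" for k
      using that by (simp add: x_def m_def)
    have conv: "subseries_convergent G T x"
      unfolding x_def by (rule hyper_multipliable_subseries_convergent[OF C g mult])
    then obtain s where s: "limitin T (\<lambda>n. finprod G x {..<n}) s sequentially"
      unfolding subseries_convergent_def by (elim allE[of _ UNIV]) auto
    have tails: "small_tails G T x"
      by (rule subseries_convergent_imp_small_tails[OF H C x conv])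
    have "ordprod G (\<lambda>k. h k [^] m' k) n = finprod G (\<lambda>j. x (\<sigma> j)) {..<n}" for n
    proof -
      have "ordprod G (\<lambda>k. h k [^] m' k) n = finprod G (\<lambda>k. h k [^] m' k) {..<n}"
        using g h_eq by (intro ordprod_eq_finprod comm_monoid_axioms) auto
      then show ?thesis
        using \<sigma> by (simp add: x_def m_def h_eq)
    qed
    then have "ordprod G (\<lambda>k. h k [^] m' k) = (\<lambda>n. finprod G (\<lambda>j. x (\<sigma> j)) {..<n})"
      by (rule ext)
    then show "\<exists>l. limitin T (ordprod G (\<lambda>k. h k [^] m' k)) l sequentially"
      using limitin_reindex[OF H C x tails s \<sigma> vanish] by auto
  qed
qed

lemma TAP_imp_HTAP_comm:
  assumes H: "Hausdorff_topological_group G T" and C: "comm_group G" and "TAP G T"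
  shows "HTAP G T"
  unfolding HTAP_def
proof
  assume "\<exists>g. inj g \<and> range g \<subseteq> carrier G \<and> hyper_multipliable G T g"
  then obtain g :: "nat \<Rightarrow> 'a" where g: "inj g" "range g \<subseteq> carrier G" "hyper_multipliable G T g"
    by blast
  have "absolutely_productive G T (range g)"
    using hyper_multipliable_range_absolutely_productive[OF H C g(2,3)] .
  moreover have "infinite (range g)"
    using g(1) by (simp add: range_inj_infinite)
  ultimately show False
    using \<open>TAP G T\<close> g(2) unfolding TAP_def by blast
qed

lemma finite_columns_bound:
  fixes R :: "nat \<Rightarrow> nat \<Rightarrow> bool"
  assumes cols: "\<And>i. finite {n. R n i}"
  obtains b where "\<And>M n i. i < M \<Longrightarrow> b M \<le> n \<Longrightarrow> \<not> R n i"
proof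
  fix M n i assume i: "i < M" and n: "Suc (Max (insert 0 (\<Union>i<M. {n. R n i}))) \<le> n"
  show "\<not> R n i"
  proof
    assume "R n i"
    then have "n \<le> Max (insert 0 (\<Union>i<M. {n. R n i}))"
      using cols i by (intro Max_ge) auto
    then show False using n by simp
  qed
qed

(* The pairs are chosen recursively, each new row beyond the columns used so far and
   each new column beyond the rows used so far. *)
lemma diagonal_selection:
  fixes R :: "nat \<Rightarrow> nat \<Rightarrow> bool"
  assumes rows: "\<And>n. finite {i. R n i}" and cols: "\<And>i. finite {n. R n i}"
    and nonzero: "\<And>N. \<exists>n\<ge>N. \<exists>i. R n i"
  shows "\<exists>(r :: nat \<Rightarrow> nat) (c :: nat \<Rightarrow> nat).
           strict_mono r \<and> strict_mono c \<and> (\<forall>j k. R (r k) (c j) \<longleftrightarrow> j = k)"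
proof -
  obtain colbd where colbd: "\<And>M n i. i < M \<Longrightarrow> colbd M \<le> n \<Longrightarrow> \<not> R n i"
    using finite_columns_bound[of R, OF cols] by metis
  obtain rowbd where rowbd: "\<And>M n i. n < M \<Longrightarrow> rowbd M \<le> i \<Longrightarrow> \<not> R n i"
    using finite_columns_bound[of "\<lambda>i n. R n i", OF rows] by metis
  define good where "good N M p \<longleftrightarrow> N \<le> fst p \<and> M \<le> snd p \<and> R (fst p) (snd p)" for N M p
  have "\<exists>p. good N M p" for N M
  proof -
    from nonzero[of "max N (colbd M)"] obtain n i where n: "max N (colbd M) \<le> n" and i: "R n i"
      by blast
    have "M \<le> i"
      using colbd[of i M n] n i by (meson max.boundedE not_le)
    then show ?thesis
      using n i unfolding good_def by (intro exI[of _ "(n, i)"]) simp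
  qed
  define pick where "pick N M = (SOME p. good N M p)" for N M
  have pick: "N \<le> fst (pick N M)" "M \<le> snd (pick N M)" "R (fst (pick N M)) (snd (pick N M))" for N M
    using someI_ex[OF \<open>\<exists>p. good N M p\<close>] unfolding pick_def good_def by blast+
  define next_pair where
    "next_pair p = pick (max (Suc (fst p)) (colbd (Suc (snd p)))) (max (Suc (snd p)) (rowbd (Suc (fst p))))"
    for p
  define st where "st k = (next_pair ^^ k) (pick 0 0)" for k
  define r where "r k = fst (st k)" for k
  define c where "c k = snd (st k)" for k
  have "max (Suc (r k)) (colbd (Suc (c k))) \<le> r (Suc k)"
    "max (Suc (c k)) (rowbd (Suc (r k))) \<le> c (Suc k)" for k
    unfolding r_def c_def st_def by (simp_all only: funpow.simps o_apply next_pair_def pick)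
  then have r_Suc: "Suc (r k) \<le> r (Suc k)" "colbd (Suc (c k)) \<le> r (Suc k)"
    and c_Suc: "Suc (c k) \<le> c (Suc k)" "rowbd (Suc (r k)) \<le> c (Suc k)" for k
    by simp_all
  have diag: "R (r k) (c k)" for k
    using pick(3) by (cases k) (simp_all add: r_def c_def st_def next_pair_def)
  have r_mono: "strict_mono r" and c_mono: "strict_mono c"
    using r_Suc(1) c_Suc(1) by (simp_all add: strict_mono_Suc_iff Suc_le_eq)
  have off_diag: "\<not> R (r k) (c j)" if "j \<noteq> k" for j k
  proof (cases "j < k")
    case True
    then have "r (Suc j) \<le> r k"
      using r_mono by (simp add: strict_mono_less_eq Suc_le_eq)
    with r_Suc(2)[of j] show ?thesis
      by (intro colbd[of "c j" "Suc (c j)"]) simp_all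
  next
    case False
    with that have "c (Suc k) \<le> c j"
      using c_mono by (simp add: strict_mono_less_eq Suc_le_eq)
    with c_Suc(2)[of k] show ?thesis
      by (intro rowbd[of "r k" "Suc (r k)"]) simp_all
  qed
  have "R (r k) (c j) \<longleftrightarrow> j = k" for j k
    using diag[of k] off_diag[of j k] by auto
  with r_mono c_mono show ?thesis
    by (intro exI[where x = r] exI[where x = c]) simp
qed

lemma carrier_restricted_product:
  assumes "\<And>i. group (D i)"
  shows "carrier (sum_group UNIV D) = {x. (\<forall>i. x i \<in> carrier (D i)) \<and> finite {i. x i \<noteq> \<one>\<^bsub>D i\<^esub>}}"
  using carrier_sum_group[of UNIV D] assms by (simp add: PiE_UNIV_domain Pi_iff)

lemma inv_restricted_product:
  assumes "\<And>i. group (D i)" "x \<in> carrier (sum_group UNIV D)"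
  shows "inv\<^bsub>sum_group UNIV D\<^esub> x = (\<lambda>i. inv\<^bsub>D i\<^esub> (x i))"
  using inv_sum_group[of UNIV D x] assms by (simp add: restrict_UNIV)

lemma topspace_fin_supp_topology:
  assumes "\<And>i. group (D i)"
  shows "topspace (fin_supp_topology D) = carrier (sum_group UNIV D)"
  unfolding fin_supp_topology_def
  using carrier_restricted_product[of D, OF assms] by (auto simp: PiE_UNIV_domain)

lemma limitin_discrete_topology:
  "limitin (discrete_topology U) f l F \<longleftrightarrow> l \<in> U \<and> eventually (\<lambda>n. f n = l) F"
proof
  assume lim: "limitin (discrete_topology U) f l F"
  then have "l \<in> U"
    by (simp add: limitin_def)
  moreover have "eventually (\<lambda>n. f n \<in> {l}) F"
    using lim \<open>l \<in> U\<close> by (intro limitinD) auto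
  ultimately show "l \<in> U \<and> eventually (\<lambda>n. f n = l) F"
    by simp
next
  assume "l \<in> U \<and> eventually (\<lambda>n. f n = l) F"
  then show "limitin (discrete_topology U) f l F"
    unfolding limitin_def by (auto elim: eventually_mono)
qed

lemma limitin_fin_supp_topology:
  assumes grp: "\<And>i. group (D i)"
  shows "limitin (fin_supp_topology D) f l sequentially \<longleftrightarrow>
    l \<in> carrier (sum_group UNIV D) \<and> eventually (\<lambda>n. f n \<in> carrier (sum_group UNIV D)) sequentially
      \<and> (\<forall>i. eventually (\<lambda>n. f n i = l i) sequentially)"
    (is "_ \<longleftrightarrow> l \<in> ?H \<and> ?ev_in \<and> ?coords")
proof -
  let ?P = "product_topology (\<lambda>i. discrete_topology (carrier (D i))) UNIV"
  have H_sub: "?H \<subseteq> topspace ?P"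
    using carrier_restricted_product[of D, OF grp] by (auto simp: PiE_UNIV_domain)
  have "limitin ?P f l sequentially \<longleftrightarrow> ?coords" if "l \<in> ?H" "?ev_in"
  proof -
    have "eventually (\<lambda>n. f n \<in> topspace ?P) sequentially"
      using \<open>?ev_in\<close> H_sub by (elim eventually_mono) blast
    moreover have "l i \<in> carrier (D i)" for i
      using \<open>l \<in> ?H\<close> carrier_restricted_product[of D, OF grp] by auto
    ultimately show ?thesis
      by (simp add: limitin_componentwise limitin_discrete_topology)
  qed
  then show ?thesis
    unfolding fin_supp_topology_def limitin_subtopology by blast
qed

lemma continuous_map_fin_supp_coordinate:
  "continuous_map (fin_supp_topology D) (discrete_topology (carrier (D i))) (\<lambda>x. x i)"
  unfolding fin_supp_topology_def
  by (intro continuous_map_from_subtopology continuous_map_product_projection) simp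

lemma continuous_map_into_fin_supp_topology:
  assumes "\<And>x. x \<in> topspace X \<Longrightarrow> f x \<in> carrier (sum_group UNIV D)"
    and "\<And>i. continuous_map X (discrete_topology (carrier (D i))) (\<lambda>x. f x i)"
  shows "continuous_map X (fin_supp_topology D) f"
  unfolding fin_supp_topology_def
  using assms by (intro continuous_map_into_subtopology) (auto simp: continuous_map_componentwise_UNIV)

(* H is a Hausdorff topological group: coordinatewise, multiplication and inversion
   are maps between discrete spaces. *)
lemma Hausdorff_topological_group_fin_supp:
  assumes grp: "\<And>i. group (D i)"
  shows "Hausdorff_topological_group (sum_group UNIV D) (fin_supp_topology D)"
proof -
  let ?H = "sum_group UNIV D" and ?T = "fin_supp_topology D"
  interpret H: group ?H using grp by simp
  note topspace = topspace_fin_supp_topology[of D, OF grp]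
  have "Hausdorff_space ?T"
    unfolding fin_supp_topology_def
    by (intro Hausdorff_space_subtopology) (simp add: Hausdorff_space_product_topology)
  moreover have "continuous_map (prod_topology ?T ?T) ?T (\<lambda>(x, y). x \<otimes>\<^bsub>?H\<^esub> y)"
  proof (rule continuous_map_into_fin_supp_topology)
    show "(\<lambda>(x, y). x \<otimes>\<^bsub>?H\<^esub> y) p \<in> carrier ?H" if "p \<in> topspace (prod_topology ?T ?T)" for p
      using that by (auto simp: topspace simp del: mult_sum_group)
    fix i
    let ?Di = "discrete_topology (carrier (D i))"
    have "continuous_map (prod_topology ?T ?T) (prod_topology ?Di ?Di) (\<lambda>p. (fst p i, snd p i))"
      by (intro continuous_map_pairedI continuous_map_compose[OF continuous_map_fst, unfolded o_def]
          continuous_map_compose[OF continuous_map_snd, unfolded o_def] continuous_map_fin_supp_coordinate)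
    moreover have "continuous_map (prod_topology ?Di ?Di) ?Di (\<lambda>(a, b). a \<otimes>\<^bsub>D i\<^esub> b)"
      unfolding prod_topology_discrete_topology[symmetric]
      using group.is_monoid[OF grp[of i]] by (auto simp: monoid.m_closed)
    ultimately show "continuous_map (prod_topology ?T ?T) ?Di (\<lambda>p. ((\<lambda>(x, y). x \<otimes>\<^bsub>?H\<^esub> y) p) i)"
      using continuous_map_compose by (fastforce simp: o_def case_prod_beta)
  qed
  moreover have "continuous_map ?T ?T (\<lambda>x. inv\<^bsub>?H\<^esub> x)"
  proof (rule continuous_map_into_fin_supp_topology)
    show "inv\<^bsub>?H\<^esub> x \<in> carrier ?H" if "x \<in> topspace ?T" for x
      using that by (simp add: topspace)
    fix i
    have "continuous_map ?T (discrete_topology (carrier (D i))) (\<lambda>x. inv\<^bsub>D i\<^esub> (x i))"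
      using continuous_map_compose[OF continuous_map_fin_supp_coordinate[of D i], of _ "m_inv (D i)"]
        group.inv_closed[OF grp[of i]] by (simp add: o_def Pi_iff)
    then show "continuous_map ?T (discrete_topology (carrier (D i))) (\<lambda>x. (inv\<^bsub>?H\<^esub> x) i)"
      by (rule continuous_map_eq) (simp add: topspace inv_restricted_product[of D, OF grp])
  qed
  ultimately show ?thesis
    unfolding Hausdorff_topological_group_def using H.is_group topspace by blast
qed

lemma ordprod_restricted_product_coordinate:
  "ordprod (sum_group UNIV D) a n i = ordprod (D i) (\<lambda>k. a k i) n"
  by (induction n) simp_all

lemma int_pow_restricted_product_coordinate:
  assumes grp: "\<And>i. group (D i)" and x: "x \<in> carrier (sum_group UNIV D)"
  shows "(x [^]\<^bsub>sum_group UNIV D\<^esub> (m :: int)) i = x i [^]\<^bsub>D i\<^esub> m"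
proof -
  have "(\<lambda>x. x i) \<in> hom (sum_group UNIV D) (D i)"
    unfolding hom_def using carrier_restricted_product[of D, OF grp] by auto
  from hom_int_pow[OF this x] show ?thesis
    using grp by simp
qed

lemma hyper_multipliable_fin_supp_subproducts:
  assumes grp: "\<And>i. group (D i)"
    and g: "range g \<subseteq> carrier (sum_group UNIV D)"
    and mult: "hyper_multipliable (sum_group UNIV D) (fin_supp_topology D) g"
  shows "\<exists>l \<in> carrier (sum_group UNIV D). \<forall>i. eventually
           (\<lambda>n. ordprod (D i) (\<lambda>k. if k \<in> S then g k i else \<one>\<^bsub>D i\<^esub>) n = l i) sequentially"
proof -
  let ?H = "sum_group UNIV D"
  interpret H: group ?H using grp by simp
  define m :: "nat \<Rightarrow> int" where "m k = (if k \<in> S then 1 else 0)" for k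
  obtain l where l: "limitin (fin_supp_topology D) (ordprod ?H (\<lambda>k. g k [^]\<^bsub>?H\<^esub> m k)) l sequentially"
    using mult unfolding hyper_multipliable_def by blast
  have "(g k [^]\<^bsub>?H\<^esub> m k) i = (if k \<in> S then g k i else \<one>\<^bsub>D i\<^esub>)" for k i
    using g by (auto simp: m_def subset_eq)
  then have "ordprod ?H (\<lambda>k. g k [^]\<^bsub>?H\<^esub> m k) n i
      = ordprod (D i) (\<lambda>k. if k \<in> S then g k i else \<one>\<^bsub>D i\<^esub>) n" for n i
    by (simp add: ordprod_restricted_product_coordinate)
  then show ?thesis
    using l unfolding limitin_fin_supp_topology[of D, OF grp] by auto
qed

lemma hyper_multipliable_fin_supp_column:
  assumes grp: "\<And>i. group (D i)"
    and g: "range g \<subseteq> carrier (sum_group UNIV D)"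
    and mult: "hyper_multipliable (sum_group UNIV D) (fin_supp_topology D) g"
  shows "finite {n. g n i \<noteq> \<one>\<^bsub>D i\<^esub>}"
proof -
  have g_coord: "g n i \<in> carrier (D i)" for n
    using g carrier_restricted_product[of D, OF grp] by auto
  obtain l where "eventually (\<lambda>n. ordprod (D i) (\<lambda>k. g k i) n = l i) sequentially"
    using hyper_multipliable_fin_supp_subproducts[OF grp g mult, of UNIV] by auto
  then have "eventually (\<lambda>n. g n i = \<one>\<^bsub>D i\<^esub>) sequentially"
    by (rule ordprod_eventually_constant[OF grp g_coord])
  then obtain N where N: "\<And>n. N \<le> n \<Longrightarrow> g n i = \<one>\<^bsub>D i\<^esub>"
    by (auto simp: eventually_sequentially)
  have "{n. g n i \<noteq> \<one>\<^bsub>D i\<^esub>} \<subseteq> {..<N}"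
  proof
    fix n assume "n \<in> {n. g n i \<noteq> \<one>\<^bsub>D i\<^esub>}"
    then have "\<not> N \<le> n"
      using N by auto
    then show "n \<in> {..<N}" by simp
  qed
  then show ?thesis
    by (rule finite_subset) simp
qed

lemma inj_avoids_value:
  fixes g :: "nat \<Rightarrow> 'a"
  assumes "inj g"
  shows "\<exists>n\<ge>N. g n \<noteq> e"
proof -
  have "g N \<noteq> g (Suc N)"
    using assms by (simp add: inj_eq)
  then show ?thesis
    by (metis le_SucI order_refl)
qed

(* The nontrivial entries g n i of an injective
   hyper-multipliable sequence form a relation with finite rows and columns and
   infinitely many nonempty rows; along a diagonal subsequence r, c the product of
   the terms g (r k) has coordinate g (r j) (c j) \<noteq> 1 at every c j, so its limit
   would have infinite support. *)
lemma HTAP_fin_supp: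
  assumes grp: "\<And>i. group (D i)"
  shows "HTAP (sum_group UNIV D) (fin_supp_topology D)"
  unfolding HTAP_def
proof
  let ?H = "sum_group UNIV D"
  assume "\<exists>g. inj g \<and> range g \<subseteq> carrier ?H \<and> hyper_multipliable ?H (fin_supp_topology D) g"
  then obtain g :: "nat \<Rightarrow> nat \<Rightarrow> 'a" where g_inj: "inj g" and g: "range g \<subseteq> carrier ?H"
    and mult: "hyper_multipliable ?H (fin_supp_topology D) g"
    by blast
  have g_coord: "g n i \<in> carrier (D i)" and rows: "finite {i. g n i \<noteq> \<one>\<^bsub>D i\<^esub>}" for n i
    using g carrier_restricted_product[of D, OF grp] by auto
  have "\<exists>n\<ge>N. \<exists>i. g n i \<noteq> \<one>\<^bsub>D i\<^esub>" for N
    using inj_avoids_value[OF g_inj, of N "\<lambda>i. \<one>\<^bsub>D i\<^esub>"] by fastforce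
  then obtain r c :: "nat \<Rightarrow> nat" where c: "strict_mono c"
    and diag: "\<And>j k. g (r k) (c j) \<noteq> \<one>\<^bsub>D (c j)\<^esub> \<longleftrightarrow> j = k"
    using diagonal_selection[of "\<lambda>n i. g n i \<noteq> \<one>\<^bsub>D i\<^esub>", OF rows
        hyper_multipliable_fin_supp_column[OF grp g mult]] by blast
  obtain l where l: "l \<in> carrier ?H" and l_coord: "\<And>i. eventually
      (\<lambda>n. ordprod (D i) (\<lambda>k. if k \<in> range r then g k i else \<one>\<^bsub>D i\<^esub>) n = l i) sequentially"
    using hyper_multipliable_fin_supp_subproducts[OF grp g mult, of "range r"] by blast
  have "l (c j) = g (r j) (c j)" for j
  proof -
    have "(\<lambda>k. if k \<in> range r then g k (c j) else \<one>\<^bsub>D (c j)\<^esub>)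
        = (\<lambda>k. if k = r j then g (r j) (c j) else \<one>\<^bsub>D (c j)\<^esub>)"
      using diag by (auto simp: fun_eq_iff) metis
    then show ?thesis
      using l_coord[of "c j"] by (intro ordprod_single_eventually[OF group.is_monoid[OF grp] g_coord]) simp
  qed
  moreover have "g (r j) (c j) \<noteq> \<one>\<^bsub>D (c j)\<^esub>" for j
    using diag by blast
  ultimately have "range c \<subseteq> {i. l i \<noteq> \<one>\<^bsub>D i\<^esub>}"
    by auto
  moreover have "finite {i. l i \<noteq> \<one>\<^bsub>D i\<^esub>}"
    using l carrier_restricted_product[of D, OF grp] by auto
  moreover have "infinite (range c)"
    using strict_mono_imp_inj_on[OF c] by (simp add: range_inj_infinite)
  ultimately show False
    using finite_subset by blast
qed

(* Part (b): H is not STAP, as witnessed by the sequence a_n e_n with a_n \<noteq> 1: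
   any powers of it converge to 1, since each coordinate is eventually trivial. *)
lemma not_STAP_fin_supp:
  assumes grp: "\<And>i. group (D i)" and nontrivial: "\<And>i. carrier (D i) \<noteq> {\<one>\<^bsub>D i\<^esub>}"
  shows "\<not> STAP (sum_group UNIV D) (fin_supp_topology D)"
proof -
  let ?H = "sum_group UNIV D"
  interpret H: group ?H using grp by simp
  have "\<exists>b. b \<in> carrier (D i) \<and> b \<noteq> \<one>\<^bsub>D i\<^esub>" for i
    using nontrivial[of i] group.is_monoid[OF grp[of i]] monoid.one_closed by blast
  then obtain a where a: "\<And>i. a i \<in> carrier (D i)" "\<And>i. a i \<noteq> \<one>\<^bsub>D i\<^esub>"
    by metis
  define g where "g n = (\<lambda>i. if i = n then a n else \<one>\<^bsub>D i\<^esub>)" for n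
  have g: "g n \<in> carrier ?H" for n
  proof -
    have "{i. g n i \<noteq> \<one>\<^bsub>D i\<^esub>} \<subseteq> {n}"
      by (auto simp: g_def)
    then show ?thesis
      using carrier_restricted_product[of D, OF grp] a grp
      by (auto simp: g_def finite_subset group.is_monoid)
  qed
  have "inj g"
  proof (rule injI)
    fix x y assume "g x = g y"
    then have "g x x = g y x" by simp
    then show "x = y" using a(2)[of x] by (auto simp: g_def split: if_splits)
  qed
  moreover have "hyper_converging ?H (fin_supp_topology D) g"
    unfolding hyper_converging_def limitin_fin_supp_topology[of D, OF grp]
  proof (intro allI conjI)
    fix m :: "nat \<Rightarrow> int" and i
    have coord: "(g n [^]\<^bsub>?H\<^esub> m n) i = \<one>\<^bsub>?H\<^esub> i" if "i < n" for n
      using that int_pow_restricted_product_coordinate[OF grp g] grp[of i]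
      by (simp add: g_def group.int_pow_one)
    show "eventually (\<lambda>n. (g n [^]\<^bsub>?H\<^esub> m n) i = \<one>\<^bsub>?H\<^esub> i) sequentially"
      using eventually_gt_at_top[of i] by (rule eventually_mono) (rule coord)
  qed (use g H.one_closed in \<open>auto simp del: one_sum_group\<close>)
  ultimately show ?thesis
    unfolding STAP_def using g by blast
qed

(* For finite factors, the elements supported in {..<N} form a finite set, and
   they exhaust H as N grows; hence H is countable. *)
lemma finite_supported_below:
  fixes D :: "nat \<Rightarrow> ('a, 'b) monoid_scheme"
  assumes grp: "\<And>i. group (D i)" and fin: "\<And>i. finite (carrier (D i))"
  shows "finite {x \<in> carrier (sum_group UNIV D). \<forall>i\<ge>N. x i = \<one>\<^bsub>D i\<^esub>}"
proof -
  let ?extend = "\<lambda>f i. if i < N then f i else \<one>\<^bsub>D i\<^esub>"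
  have "{x \<in> carrier (sum_group UNIV D). \<forall>i\<ge>N. x i = \<one>\<^bsub>D i\<^esub>}
      \<subseteq> ?extend ` (\<Pi>\<^sub>E i\<in>{..<N}. carrier (D i))"
  proof
    fix x assume x: "x \<in> {x \<in> carrier (sum_group UNIV D). \<forall>i\<ge>N. x i = \<one>\<^bsub>D i\<^esub>}"
    then have "x = ?extend (restrict x {..<N})"
      by (auto simp: fun_eq_iff not_less)
    moreover have "restrict x {..<N} \<in> (\<Pi>\<^sub>E i\<in>{..<N}. carrier (D i))"
      using x carrier_restricted_product[of D, OF grp] by auto
    ultimately show "x \<in> ?extend ` (\<Pi>\<^sub>E i\<in>{..<N}. carrier (D i))"
      by (rule image_eqI)
  qed
  moreover have "finite (\<Pi>\<^sub>E i\<in>{..<N}. carrier (D i))"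
    using fin by (intro finite_PiE) auto
  ultimately show ?thesis
    by (rule finite_subset[OF _ finite_imageI])
qed

lemma carrier_restricted_product_Union:
  fixes D :: "nat \<Rightarrow> ('a, 'b) monoid_scheme"
  assumes grp: "\<And>i. group (D i)"
  shows "carrier (sum_group UNIV D) = (\<Union>N. {x \<in> carrier (sum_group UNIV D). \<forall>i\<ge>N. x i = \<one>\<^bsub>D i\<^esub>})"
proof (intro equalityI subsetI)
  fix x assume x: "x \<in> carrier (sum_group UNIV D)"
  then have "finite {i. x i \<noteq> \<one>\<^bsub>D i\<^esub>}"
    using carrier_restricted_product[of D, OF grp] by auto
  then obtain N where "{i. x i \<noteq> \<one>\<^bsub>D i\<^esub>} \<subseteq> {..<N}"
    by (blast dest: finite_nat_bounded)
  then have "\<forall>i\<ge>N. x i = \<one>\<^bsub>D i\<^esub>"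
    by force
  with x show "x \<in> (\<Union>N. {x \<in> carrier (sum_group UNIV D). \<forall>i\<ge>N. x i = \<one>\<^bsub>D i\<^esub>})"
    by blast
qed auto

lemma countable_restricted_product:
  fixes D :: "nat \<Rightarrow> ('a, 'b) monoid_scheme"
  assumes "\<And>i. group (D i)" "\<And>i. finite (carrier (D i))"
  shows "countable (carrier (sum_group UNIV D))"
proof -
  have "countable (\<Union>N. {x \<in> carrier (sum_group UNIV D). \<forall>i\<ge>N. x i = \<one>\<^bsub>D i\<^esub>})"
    using finite_supported_below[of D, OF assms] by (simp add: countable_finite)
  then show ?thesis
    using carrier_restricted_product_Union[OF assms(1)] by simp
qed

lemma metrizable_fin_supp_topology: "metrizable_space (fin_supp_topology D)"
  unfolding fin_supp_topology_def
  by (intro metrizable_space_subtopology) (simp add: metrizable_space_product_topology)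

lemma comm_group_restricted_product:
  assumes grp: "\<And>i. group (D i)" and comm: "\<And>i. comm_group (D i)"
  shows "comm_group (sum_group UNIV D)"
proof (rule group.group_comm_groupI)
  show "group (sum_group UNIV D)"
    using grp by simp
  fix x y assume "x \<in> carrier (sum_group UNIV D)" "y \<in> carrier (sum_group UNIV D)"
  then have "x i \<in> carrier (D i)" "y i \<in> carrier (D i)" for i
    using carrier_restricted_product[of D, OF grp] by auto
  then show "x \<otimes>\<^bsub>sum_group UNIV D\<^esub> y = y \<otimes>\<^bsub>sum_group UNIV D\<^esub> x"
    by (simp add: comm_monoid.m_comm[OF comm_group.axioms(1)[OF comm]])
qed

(* Every neighbourhood of 1 contains all elements trivial on some {..<N}: otherwise
   counterexamples u_N would converge to 1 without entering the neighbourhood. *)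
lemma fin_supp_neighbourhood_one:
  fixes D :: "nat \<Rightarrow> ('a, 'b) monoid_scheme"
  assumes grp: "\<And>i. group (D i)"
    and U: "openin (fin_supp_topology D) U" "\<one>\<^bsub>sum_group UNIV D\<^esub> \<in> U"
  shows "\<exists>N. \<forall>u \<in> carrier (sum_group UNIV D). (\<forall>i<N. u i = \<one>\<^bsub>D i\<^esub>) \<longrightarrow> u \<in> U"
proof (rule ccontr)
  let ?H = "sum_group UNIV D"
  interpret H: group ?H using grp by simp
  assume "\<not> ?thesis"
  then have "\<forall>N. \<exists>v. v \<in> carrier ?H \<and> (\<forall>i<N. v i = \<one>\<^bsub>D i\<^esub>) \<and> v \<notin> U"
    by blast
  from choice[OF this] obtain u
    where "\<forall>N. u N \<in> carrier ?H \<and> (\<forall>i<N. u N i = \<one>\<^bsub>D i\<^esub>) \<and> u N \<notin> U"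
    by blast
  then have u: "\<And>N. u N \<in> carrier ?H" "\<And>N i. i < N \<Longrightarrow> u N i = \<one>\<^bsub>D i\<^esub>"
    "\<And>N. u N \<notin> U"
    by simp_all
  have "limitin (fin_supp_topology D) u \<one>\<^bsub>?H\<^esub> sequentially"
    unfolding limitin_fin_supp_topology[of D, OF grp]
  proof (intro conjI allI)
    fix i
    show "eventually (\<lambda>N. u N i = \<one>\<^bsub>?H\<^esub> i) sequentially"
      using eventually_gt_at_top[of i] by (rule eventually_mono) (simp add: u(2))
  qed (use u(1) H.one_closed in \<open>auto simp del: one_sum_group\<close>)
  then have "eventually (\<lambda>N. u N \<in> U) sequentially"
    using U by (rule limitinD)
  then show False
    using u(3) by simp
qed

(* Precompactness: every x factors as (x on {..<N}) \<otimes> (x off {..<N}), the first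
   factor ranging over a finite set and the second lying in the neighbourhood. *)
lemma precompact_fin_supp:
  fixes D :: "nat \<Rightarrow> ('a, 'b) monoid_scheme"
  assumes grp: "\<And>i. group (D i)" and fin: "\<And>i. finite (carrier (D i))"
  shows "precompact_group (sum_group UNIV D) (fin_supp_topology D)"
  unfolding precompact_group_def
proof (intro allI impI)
  let ?H = "sum_group UNIV D"
  fix U assume "openin (fin_supp_topology D) U \<and> \<one>\<^bsub>?H\<^esub> \<in> U"
  then obtain N where N: "\<forall>u \<in> carrier ?H. (\<forall>i<N. u i = \<one>\<^bsub>D i\<^esub>) \<longrightarrow> u \<in> U"
    using fin_supp_neighbourhood_one[of D, OF grp] by blast
  let ?F = "{x \<in> carrier ?H. \<forall>i\<ge>N. x i = \<one>\<^bsub>D i\<^esub>}"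
  have "carrier ?H \<subseteq> (\<Union>f\<in>?F. f <#\<^bsub>?H\<^esub> U)"
  proof
    fix x assume x: "x \<in> carrier ?H"
    then have x_coord: "x i \<in> carrier (D i)" and x_supp: "finite {i. x i \<noteq> \<one>\<^bsub>D i\<^esub>}" for i
      using carrier_restricted_product[of D, OF grp] by auto
    define f where "f i = (if i < N then x i else \<one>\<^bsub>D i\<^esub>)" for i
    define u where "u i = (if i < N then \<one>\<^bsub>D i\<^esub> else x i)" for i
    have "finite {i. f i \<noteq> \<one>\<^bsub>D i\<^esub>}" "finite {i. u i \<noteq> \<one>\<^bsub>D i\<^esub>}"
      by (auto intro: finite_subset[OF _ x_supp] simp: f_def u_def)
    moreover have "f i \<in> carrier (D i)" "u i \<in> carrier (D i)" for i
      using x_coord grp by (simp_all add: f_def u_def group.is_monoid)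
    ultimately have "f \<in> carrier ?H" "u \<in> carrier ?H"
      unfolding carrier_restricted_product[of D, OF grp] by blast+
    moreover have "x = f \<otimes>\<^bsub>?H\<^esub> u"
      using x_coord grp by (auto simp: f_def u_def fun_eq_iff group.is_monoid)
    moreover have "u \<in> U"
      using N \<open>u \<in> carrier ?H\<close> by (simp add: u_def)
    moreover have "f \<in> ?F"
      using \<open>f \<in> carrier ?H\<close> by (simp add: f_def)
    ultimately show "x \<in> (\<Union>f\<in>?F. f <#\<^bsub>?H\<^esub> U)"
      unfolding l_coset_def by blast
  qed
  then show "\<exists>F. finite F \<and> F \<subseteq> carrier ?H \<and> carrier ?H \<subseteq> (\<Union>x\<in>F. x <#\<^bsub>?H\<^esub> U)"
    using finite_supported_below[of D N, OF grp fin] by blast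
qed

theorem lemma4p4:
  shows "(\<forall>(G :: ('a, 'b) monoid_scheme) T. Hausdorff_topological_group G T \<longrightarrow>
            (STAP G T \<longrightarrow> HTAP G T) \<and> (HTAP G T \<longrightarrow> TAP G T))
       \<and> (\<forall>(G :: ('a, 'b) monoid_scheme) T. Hausdorff_topological_group G T \<and> comm_group G \<longrightarrow>
            (HTAP G T \<longleftrightarrow> TAP G T))
       \<and> (\<forall>D :: nat \<Rightarrow> ('c, 'd) monoid_scheme.
            (\<forall>i. group (D i) \<and> carrier (D i) \<noteq> {\<one>\<^bsub>D i\<^esub>}) \<longrightarrow>
              Hausdorff_topological_group (sum_group UNIV D) (fin_supp_topology D)
              \<and> HTAP (sum_group UNIV D) (fin_supp_topology D)
              \<and> \<not> STAP (sum_group UNIV D) (fin_supp_topology D)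
              \<and> ((\<forall>i. finite (carrier (D i)) \<and> comm_group (D i)) \<longrightarrow>
                   countable (carrier (sum_group UNIV D))
                   \<and> metrizable_space (fin_supp_topology D)
                   \<and> precompact_group (sum_group UNIV D) (fin_supp_topology D)
                   \<and> comm_group (sum_group UNIV D)
                   \<and> TAP (sum_group UNIV D) (fin_supp_topology D)
                   \<and> \<not> STAP (sum_group UNIV D) (fin_supp_topology D)))"
proof (intro conjI allI impI)
  fix G :: "('a, 'b) monoid_scheme" and T
  assume H: "Hausdorff_topological_group G T"
  show "STAP G T \<Longrightarrow> HTAP G T" by (rule STAP_imp_HTAP[OF H])
  show "HTAP G T \<Longrightarrow> TAP G T" by (rule HTAP_imp_TAP)
next
  fix G :: "('a, 'b) monoid_scheme" and T
  assume "Hausdorff_topological_group G T \<and> comm_group G"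
  then show "HTAP G T \<longleftrightarrow> TAP G T"
    using HTAP_imp_TAP TAP_imp_HTAP_comm by blast
next
  fix D :: "nat \<Rightarrow> ('c, 'd) monoid_scheme"
  assume "\<forall>i. group (D i) \<and> carrier (D i) \<noteq> {\<one>\<^bsub>D i\<^esub>}"
  then have grp: "\<And>i. group (D i)" and nontrivial: "\<And>i. carrier (D i) \<noteq> {\<one>\<^bsub>D i\<^esub>}"
    by auto
  show "Hausdorff_topological_group (sum_group UNIV D) (fin_supp_topology D)"
    by (rule Hausdorff_topological_group_fin_supp[OF grp])
  show HTAP: "HTAP (sum_group UNIV D) (fin_supp_topology D)"
    by (rule HTAP_fin_supp[of D, OF grp])
  show "TAP (sum_group UNIV D) (fin_supp_topology D)"
    by (rule HTAP_imp_TAP[OF HTAP])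
  show "\<not> STAP (sum_group UNIV D) (fin_supp_topology D)"
    "\<not> STAP (sum_group UNIV D) (fin_supp_topology D)"
    by (rule not_STAP_fin_supp[of D, OF grp nontrivial])+
  show "metrizable_space (fin_supp_topology D)"
    by (rule metrizable_fin_supp_topology)
  assume "\<forall>i. finite (carrier (D i)) \<and> comm_group (D i)"
  then have fin: "\<And>i. finite (carrier (D i))" and comm: "\<And>i. comm_group (D i)"
    by auto
  show "countable (carrier (sum_group UNIV D))"
    by (rule countable_restricted_product[of D, OF grp fin])
  show "precompact_group (sum_group UNIV D) (fin_supp_topology D)"
    by (rule precompact_fin_supp[of D, OF grp fin])
  show "comm_group (sum_group UNIV D)"
    by (rule comm_group_restricted_product[of D, OF grp comm])
qed

end
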